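(* Let $H,K$ be complex Hilbert spaces, fix $\lambda\in(0,1)$, and let $\Phi:\mathcal{B}(H)\to\mathcal{B}(K)$ be a bijective map satisfying $\Delta_\lambda(\Phi(A)\Phi(B))=\Phi(\Delta_\lambda(AB))$ for all $A,B\in\mathcal{B}(H)$. Let $h:\mathbb{C}\to\mathbb{C}$ be the function with $\Phi(\alpha I)=h(\alpha)I$ for all $\alpha\in\mathbb{C}$. Then for every $A\in\mathcal{B}(H)$ and all unit vectors $x\in H$, $y\in K$ with $\Phi(x\otimes x)=y\otimes y$, $$\langle\Phi(A)y,y\rangle=h(\langle Ax,x\rangle).$$
   Context: For vectors $x,y$, $x\otimes y$ denotes the operator $u\mapsto\langle u,y\rangle x$. For $T\in\mathcal{B}(H)$, $|T|=(T^*T)^{1/2}$ and $T=V|T|$ is the polar decomposition, where $V$ is the partial isometry with $\mathcal{N}(V)=\mathcal{N}(T)$ and $\mathcal{N}(V^* )=\mathcal{N}(T^* )$. For $\lambda\in[0,1]$, the $\lambda$-Aluthge transform of $T$ is $\Delta_\lambda(T)=|T|^\lambda V|T|^{1-\lambda}$, with powers defined by continuous functional calculus. For such $\Phi$ there always exists a function $h$ with $\Phi(\alpha I)=h(\alpha)I$ for all $\alpha$. No linearity or continuity of $\Phi$ is assumed. *)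

theory Defs
  imports "HOL-Analysis.Analysis" "HOL-Computational_Algebra.Polynomial"
begin

text \<open>HOL-Analysis only has real inner product spaces, so we introduce complex
Hilbert spaces as a type class: a complete real normed vector space with a
complex scalar multiplication extending the real one and a complex inner product
(linear in the first argument) inducing the norm.\<close>

class complex_hilbert = real_normed_vector + complete_space +
  fixes scaleC :: "complex \<Rightarrow> 'a \<Rightarrow> 'a" (infixr \<open>*\<^sub>C\<close> 75)
    and cinner :: "'a \<Rightarrow> 'a \<Rightarrow> complex"
  assumes scaleC_add_right: "a *\<^sub>C (x + y) = a *\<^sub>C x + a *\<^sub>C y"
    and scaleC_add_left: "(a + b) *\<^sub>C x = a *\<^sub>C x + b *\<^sub>C x"
    and scaleC_scaleC: "a *\<^sub>C (b *\<^sub>C x) = (a * b) *\<^sub>C x"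
    and scaleC_one: "1 *\<^sub>C x = x"
    and scaleR_scaleC: "scaleR r x = complex_of_real r *\<^sub>C x"
    and cinner_add_left: "cinner (x + y) z = cinner x z + cinner y z"
    and cinner_scaleC_left: "cinner (a *\<^sub>C x) y = a * cinner x y"
    and cinner_commute: "cinner y x = cnj (cinner x y)"
    and cinner_Re_nonneg: "0 \<le> Re (cinner x x)"
    and cinner_eq_zero_iff: "cinner x x = 0 \<longleftrightarrow> x = 0"
    and norm_eq_sqrt_cinner: "norm x = sqrt (Re (cinner x x))"

text \<open>Elements of B(H) are represented as bounded complex-linear functions.\<close>

definition bop :: "('a::complex_hilbert \<Rightarrow> 'a) \<Rightarrow> bool" where
  "bop T \<longleftrightarrow> bounded_linear T \<and> (\<forall>c x. T (c *\<^sub>C x) = c *\<^sub>C T x)"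

definition idop :: "'a::complex_hilbert \<Rightarrow> 'a" where
  "idop = (\<lambda>x. x)"

definition rank1 :: "'a::complex_hilbert \<Rightarrow> 'a \<Rightarrow> 'a \<Rightarrow> 'a" where
  "rank1 x y = (\<lambda>u. cinner u y *\<^sub>C x)"

definition adj :: "('a::complex_hilbert \<Rightarrow> 'a) \<Rightarrow> ('a \<Rightarrow> 'a)" where
  "adj T = (THE S. bop S \<and> (\<forall>x y. cinner (T x) y = cinner x (S y)))"

definition ker :: "('a::complex_hilbert \<Rightarrow> 'a) \<Rightarrow> 'a set" where
  "ker T = {x. T x = 0}"

definition orth_compl :: "'a::complex_hilbert set \<Rightarrow> 'a set" where
  "orth_compl S = {x. \<forall>y\<in>S. cinner x y = 0}"

definition partial_isometry :: "('a::complex_hilbert \<Rightarrow> 'a) \<Rightarrow> bool" where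
  "partial_isometry V \<longleftrightarrow> bop V \<and> (\<forall>x\<in>orth_compl (ker V). norm (V x) = norm x)"

definition positive_op :: "('a::complex_hilbert \<Rightarrow> 'a) \<Rightarrow> bool" where
  "positive_op P \<longleftrightarrow> bop P \<and> (\<forall>x. Im (cinner (P x) x) = 0 \<and> 0 \<le> Re (cinner (P x) x))"

definition poly_op :: "real poly \<Rightarrow> ('a::complex_hilbert \<Rightarrow> 'a) \<Rightarrow> 'a \<Rightarrow> 'a" where
  "poly_op p P = (\<lambda>x. \<Sum>i\<le>degree p. coeff p i *\<^sub>R (P ^^ i) x)"

text \<open>For a positive operator P (spectrum in [0, norm P]) and a > 0, the operator
P^a of the continuous functional calculus: the norm limit of p_n(P) for any
sequence of real polynomials p_n converging uniformly to t^a on [0, norm P].\<close>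
definition op_powr :: "('a::complex_hilbert \<Rightarrow> 'a) \<Rightarrow> real \<Rightarrow> ('a \<Rightarrow> 'a)" where
  "op_powr P a = (THE Q. bop Q \<and>
     (\<forall>p :: nat \<Rightarrow> real poly.
        uniform_limit {0..onorm P} (\<lambda>n t. poly (p n) t) (\<lambda>t. t powr a) sequentially \<longrightarrow>
        ((\<lambda>n. onorm (\<lambda>x. poly_op (p n) P x - Q x)) \<longlonglongrightarrow> 0)))"

definition op_abs :: "('a::complex_hilbert \<Rightarrow> 'a) \<Rightarrow> ('a \<Rightarrow> 'a)" where
  "op_abs T = op_powr (adj T \<circ> T) (1/2)"

definition polar_part :: "('a::complex_hilbert \<Rightarrow> 'a) \<Rightarrow> ('a \<Rightarrow> 'a)" where
  "polar_part T = (THE V. partial_isometry V \<and> (\<forall>x. T x = V (op_abs T x)) \<and>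
      ker V = ker T \<and> ker (adj V) = ker (adj T))"

definition aluthge :: "real \<Rightarrow> ('a::complex_hilbert \<Rightarrow> 'a) \<Rightarrow> ('a \<Rightarrow> 'a)" where
  "aluthge l T = op_powr (op_abs T) l \<circ> polar_part T \<circ> op_powr (op_abs T) (1 - l)"

end

theory Submission
  imports Defs
begin

text \<open>Everything reduces to rank-one operators. For a unit vector \<open>v\<close> one has
\<open>|w \<otimes> v| = \<parallel>w\<parallel> v \<otimes> v\<close>, the polar part of \<open>w \<otimes> v\<close> is \<open>(w/\<parallel>w\<parallel>) \<otimes> v\<close>, and the powers of
\<open>|w \<otimes> v|\<close> are again multiples of \<open>v \<otimes> v\<close>; hence \<open>\<Delta>\<^sub>\<lambda>(w \<otimes> v) = \<langle>w,v\<rangle> v \<otimes> v\<close>, and in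
particular \<open>\<Delta>\<^sub>\<lambda>(A (x \<otimes> x)) = \<langle>Ax,x\<rangle> x \<otimes> x\<close>. With \<open>\<alpha> = \<langle>Ax,x\<rangle>\<close>, applying the hypothesis
to the pairs \<open>(A, x \<otimes> x)\<close> and \<open>(\<alpha>I, x \<otimes> x)\<close> computes \<open>\<Phi>(\<alpha> x \<otimes> x)\<close> in two ways,
as \<open>\<langle>\<Phi>(A)y,y\<rangle> y \<otimes> y\<close> and as \<open>h(\<alpha>) y \<otimes> y\<close>.\<close>

lemma cinner_add_right: "cinner x (y + z) = cinner x y + cinner (x::'a::complex_hilbert) z"
  by (metis cinner_add_left cinner_commute complex_cnj_add)

lemma cinner_scaleC_right: "cinner x (a *\<^sub>C y) = cnj a * cinner (x::'a::complex_hilbert) y"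
  by (metis cinner_commute cinner_scaleC_left complex_cnj_mult)

lemma scaleC_zero_left [simp]: "0 *\<^sub>C (x::'a::complex_hilbert) = 0"
  by (metis add_cancel_right_right add_0 scaleC_add_left)

lemma scaleC_zero_right [simp]: "a *\<^sub>C (0::'a::complex_hilbert) = 0"
  by (metis add_cancel_right_right add_0 scaleC_add_right)

lemma cinner_zero_left [simp]: "cinner 0 (x::'a::complex_hilbert) = 0"
  by (metis cinner_scaleC_left mult_zero_left scaleC_zero_left)

lemma cinner_zero_right [simp]: "cinner (x::'a::complex_hilbert) 0 = 0"
  by (metis cinner_commute cinner_zero_left complex_cnj_zero)

lemma minus_eq_scaleC: "- (x::'a::complex_hilbert) = (-1) *\<^sub>C x"
proof -
  have "- x = scaleR (-1) x" by simp
  also have "\<dots> = complex_of_real (-1) *\<^sub>C x" by (rule scaleR_scaleC)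
  finally show ?thesis by simp
qed

lemma scaleC_minus_left: "(- a) *\<^sub>C (x::'a::complex_hilbert) = - (a *\<^sub>C x)"
  by (simp add: minus_eq_scaleC[of "a *\<^sub>C x"] scaleC_scaleC)

lemma scaleC_diff_left: "(a - b) *\<^sub>C (x::'a::complex_hilbert) = a *\<^sub>C x - b *\<^sub>C x"
  using scaleC_add_left[of a "-b" x] by (simp add: scaleC_minus_left)

lemma cinner_minus_left: "cinner (- x) (y::'a::complex_hilbert) = - cinner x y"
  by (simp add: minus_eq_scaleC[of x] cinner_scaleC_left)

lemma cinner_minus_right: "cinner y (- x::'a::complex_hilbert) = - cinner y x"
  by (simp add: minus_eq_scaleC[of x] cinner_scaleC_right)

lemma cinner_diff_left: "cinner (x - z) (y::'a::complex_hilbert) = cinner x y - cinner z y"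
  using cinner_add_left[of x "-z" y] by (simp add: cinner_minus_left)

lemma cinner_diff_right: "cinner y (x - z::'a::complex_hilbert) = cinner y x - cinner y z"
  using cinner_add_right[of y x "-z"] by (simp add: cinner_minus_right)

lemma cinner_self: "cinner x (x::'a::complex_hilbert) = complex_of_real ((norm x)\<^sup>2)"
proof -
  have "Im (cinner x x) = 0"
    using arg_cong[OF cinner_commute[of x x], of Im] by simp
  moreover have "Re (cinner x x) = (norm x)\<^sup>2"
    using norm_eq_sqrt_cinner[of x] cinner_Re_nonneg[of x] by simp
  ultimately show ?thesis by (simp add: complex_eq_iff)
qed

lemma cinner_unit: "norm (v::'a::complex_hilbert) = 1 \<Longrightarrow> cinner v v = 1"
  by (simp add: cinner_self)

lemma norm_scaleC: "norm (a *\<^sub>C (x::'a::complex_hilbert)) = cmod a * norm x"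
proof -
  have "cinner (a *\<^sub>C x) (a *\<^sub>C x) = a * cnj a * cinner x x"
    by (simp add: cinner_scaleC_left cinner_scaleC_right mult.assoc)
  then have "complex_of_real ((norm (a *\<^sub>C x))\<^sup>2) = a * cnj a * complex_of_real ((norm x)\<^sup>2)"
    by (simp only: cinner_self)
  also have "\<dots> = complex_of_real ((cmod a * norm x)\<^sup>2)"
    by (simp only: complex_norm_square mult.assoc of_real_mult power_mult_distrib
        mult.commute mult.left_commute)
  finally have "(norm (a *\<^sub>C x))\<^sup>2 = (cmod a * norm x)\<^sup>2"
    using of_real_eq_iff by blast
  then show ?thesis
    using power2_eq_iff_nonneg[of "norm (a *\<^sub>C x)" "cmod a * norm x"] by simp
qed

lemma scaleC_eq_0_iff: "a *\<^sub>C (x::'a::complex_hilbert) = 0 \<longleftrightarrow> a = 0 \<or> x = 0"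
  by (metis norm_scaleC mult_eq_0_iff norm_eq_zero)

lemma cinner_eq_right_imp_eq: "(\<And>x. cinner x a = cinner x (b::'a::complex_hilbert)) \<Longrightarrow> a = b"
proof -
  assume "\<And>x. cinner x a = cinner x b"
  then have "cinner (a - b) (a - b) = 0"
    by (simp add: cinner_diff_right)
  then show "a = b"
    by (simp add: cinner_eq_zero_iff)
qed

lemma cinner_proj_orthogonal:
  "norm (v::'a::complex_hilbert) = 1 \<Longrightarrow> cinner (x - cinner x v *\<^sub>C v) v = 0"
  by (simp add: cinner_diff_left cinner_scaleC_left cinner_unit)

lemma norm_cinner_unit_le:
  assumes v: "norm (v::'a::complex_hilbert) = 1"
  shows "cmod (cinner x v) \<le> norm x"
proof -
  define z where "z = x - cinner x v *\<^sub>C v"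
  have "cinner v z = 0"
    using cinner_proj_orthogonal[OF v, of x] cinner_commute[of v z] by (simp add: z_def)
  then have "cinner z z = cinner x x - cnj (cinner x v) * cinner x v"
    by (simp add: z_def cinner_diff_left cinner_diff_right cinner_scaleC_left
        cinner_scaleC_right cinner_unit[OF v] algebra_simps)
  also have "cnj (cinner x v) * cinner x v = complex_of_real ((cmod (cinner x v))\<^sup>2)"
    by (simp only: complex_norm_square mult.commute)
  finally have "complex_of_real ((norm z)\<^sup>2)
      = complex_of_real ((norm x)\<^sup>2 - (cmod (cinner x v))\<^sup>2)"
    by (simp only: cinner_self of_real_diff)
  then have "(norm z)\<^sup>2 = (norm x)\<^sup>2 - (cmod (cinner x v))\<^sup>2"
    using of_real_eq_iff by blast
  then have "(cmod (cinner x v))\<^sup>2 \<le> (norm x)\<^sup>2"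
    by (smt (verit) zero_le_power2)
  then show ?thesis
    by (simp add: power2_le_iff_abs_le)
qed

lemma norm_scaleR_sgn: "norm x *\<^sub>R sgn x = (x::'a::real_normed_vector)"
  by (cases "x = 0") (simp_all add: sgn_div_norm)

lemma cinner_cauchy_schwarz: "cmod (cinner x y) \<le> norm x * norm (y::'a::complex_hilbert)"
proof (cases "y = 0")
  case False
  define v where "v = complex_of_real (1 / norm y) *\<^sub>C y"
  have v: "norm v = 1"
    using False by (simp add: v_def norm_scaleC norm_divide)
  have "complex_of_real (norm y) * complex_of_real (1 / norm y) = 1"
    using False by (simp flip: of_real_mult)
  then have y: "y = complex_of_real (norm y) *\<^sub>C v"
    by (simp only: v_def scaleC_scaleC scaleC_one)
  have "cmod (cinner x y) = norm y * cmod (cinner x v)"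
    by (subst y) (simp only: cinner_scaleC_right norm_mult complex_cnj_complex_of_real
        norm_of_real abs_norm_cancel)
  also have "\<dots> \<le> norm y * norm x"
    using norm_cinner_unit_le[OF v] by (intro mult_left_mono) auto
  finally show ?thesis
    by (simp add: mult.commute)
qed simp

lemma rank1_apply: "rank1 w v x = cinner x v *\<^sub>C w"
  by (simp add: rank1_def)

lemma bop_rank1: "bop (rank1 w v)"
  unfolding bop_def
proof
  show "bounded_linear (rank1 w v)"
  proof (rule bounded_linear_intro[where K = "norm v * norm w"])
    fix x y show "rank1 w v (x + y) = rank1 w v x + rank1 w v y"
      by (simp add: rank1_apply cinner_add_left scaleC_add_left)
  next
    fix r x show "rank1 w v (r *\<^sub>R x) = r *\<^sub>R rank1 w v x"
      by (simp add: rank1_apply scaleR_scaleC cinner_scaleC_left scaleC_scaleC)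
  next
    fix x show "norm (rank1 w v x) \<le> norm x * (norm v * norm w)"
      using cinner_cauchy_schwarz[of x v]
      by (simp add: rank1_apply norm_scaleC mult.assoc[symmetric] mult_right_mono)
  qed
  show "\<forall>c x. rank1 w v (c *\<^sub>C x) = c *\<^sub>C rank1 w v x"
    by (simp add: rank1_apply cinner_scaleC_left scaleC_scaleC)
qed

lemma bounded_linear_rank1: "bounded_linear (rank1 w v)"
  using bop_rank1[of w v] by (simp add: bop_def)

lemma bop_scalar: "bop (\<lambda>u. \<alpha> *\<^sub>C idop u)"
  unfolding bop_def
proof
  show "bounded_linear (\<lambda>u. \<alpha> *\<^sub>C idop u)"
  proof (rule bounded_linear_intro[where K = "cmod \<alpha>"])
    fix x y show "\<alpha> *\<^sub>C idop (x + y) = \<alpha> *\<^sub>C idop x + \<alpha> *\<^sub>C idop y"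
      by (simp add: idop_def scaleC_add_right)
  next
    fix r x show "\<alpha> *\<^sub>C idop (r *\<^sub>R x) = r *\<^sub>R (\<alpha> *\<^sub>C idop x)"
      by (simp add: idop_def scaleR_scaleC scaleC_scaleC mult.commute)
  next
    fix x show "norm (\<alpha> *\<^sub>C idop x) \<le> norm x * cmod \<alpha>"
      by (simp add: idop_def norm_scaleC mult.commute)
  qed
  show "\<forall>c x. \<alpha> *\<^sub>C idop (c *\<^sub>C x) = c *\<^sub>C (\<alpha> *\<^sub>C idop x)"
    by (simp add: idop_def scaleC_scaleC mult.commute)
qed

lemma comp_rank1: "bop A \<Longrightarrow> A \<circ> rank1 w v = rank1 (A w) v"
  by (simp add: fun_eq_iff rank1_apply bop_def)

lemma adj_rank1: "adj (rank1 w v) = rank1 v w"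
proof -
  have "cinner (rank1 w v x) y = cinner x (rank1 v w y)" for x y
    by (simp add: rank1_apply cinner_scaleC_left cinner_scaleC_right cinner_commute[of y w]
        mult.commute)
  then show ?thesis
    unfolding adj_def
    by (intro the_equality) (auto simp: bop_rank1 fun_eq_iff intro: cinner_eq_right_imp_eq)
qed

lemma ker_rank1: "ker (rank1 w v) = (if w = 0 then UNIV else {x. cinner x v = 0})"
  by (auto simp: ker_def rank1_apply scaleC_eq_0_iff)

lemma rank1_scaled_unit_eq_iff:
  assumes v: "norm (v::'a::complex_hilbert) = 1"
  shows "rank1 (a *\<^sub>C v) v = rank1 (b *\<^sub>C v) v \<longleftrightarrow> a = b"
proof
  assume "rank1 (a *\<^sub>C v) v = rank1 (b *\<^sub>C v) v"
  then have "a *\<^sub>C v = b *\<^sub>C v"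
    by (metis rank1_apply cinner_unit[OF v] scaleC_one)
  then have "(a - b) *\<^sub>C v = 0"
    by (simp add: scaleC_diff_left)
  then show "a = b"
    using v by (auto simp: scaleC_eq_0_iff)
qed simp

lemma bounded_linear_poly_op:
  assumes "bounded_linear P"
  shows "bounded_linear (poly_op p P)"
proof -
  have "bounded_linear (P ^^ i)" for i
    by (induction i) (simp_all add: id_def bounded_linear_compose[OF assms] comp_def)
  then show ?thesis
    unfolding poly_op_def
    by (intro bounded_linear_sum bounded_linear_compose[OF bounded_linear_scaleR_right])
qed

lemma polynomial_uniform_approximation:
  fixes f :: "real \<Rightarrow> real"
  assumes "continuous_on {0..M} f"
  obtains p :: "nat \<Rightarrow> real poly" where
    "uniform_limit {0..M} (\<lambda>n t. poly (p n) t) f sequentially"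
proof -
  have "\<exists>q::real poly. \<forall>t\<in>{0..M}. \<bar>f t - poly q t\<bar> < 1 / real (Suc n)" for n
  proof -
    obtain g where g: "real_polynomial_function g"
      "\<And>t. t \<in> {0..M} \<Longrightarrow> \<bar>f t - g t\<bar> < 1 / real (Suc n)"
      using Stone_Weierstrass_real_polynomial_function[OF compact_Icc assms, of "1 / real (Suc n)"] by auto
    then obtain a N where "g = (\<lambda>x. \<Sum>i\<le>N. a i * x ^ i)"
      using real_polynomial_function_iff_sum by blast
    then have "poly (\<Sum>i\<le>N. monom (a i) i) t = g t" for t
      by (simp add: poly_sum poly_monom)
    with g(2) show ?thesis by metis
  qed
  then obtain p where p: "\<And>n t. t \<in> {0..M} \<Longrightarrow> \<bar>f t - poly (p n) t\<bar> < 1 / real (Suc n)"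
    by metis
  have "uniform_limit {0..M} (\<lambda>n t. poly (p n) t) f sequentially"
  proof (rule uniform_limitI)
    fix e :: real assume "e > 0"
    then obtain N :: nat where N: "1 / real (Suc N) < e"
      using nat_approx_posE by blast
    have "dist (poly (p n) t) (f t) < e" if "N \<le> n" "t \<in> {0..M}" for n t
    proof -
      have "1 / real (Suc n) \<le> 1 / real (Suc N)"
        using \<open>N \<le> n\<close> by (simp add: frac_le)
      then show ?thesis
        using p[OF \<open>t \<in> {0..M}\<close>, of n] N by (simp add: dist_real_def abs_minus_commute)
    qed
    then show "\<forall>\<^sub>F n in sequentially. \<forall>t\<in>{0..M}. dist (poly (p n) t) (f t) < e"
      unfolding eventually_sequentially by blast
  qed
  then show ?thesis using that by blast
qed

lemma operator_limit_unique:
  fixes F :: "nat \<Rightarrow> 'a::real_normed_vector \<Rightarrow> 'b::real_normed_vector"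
  assumes F: "\<And>n. bounded_linear (F n)" and Q: "bounded_linear Q" "bounded_linear Q'"
    and lim: "(\<lambda>n. onorm (\<lambda>x. F n x - Q x)) \<longlonglongrightarrow> 0"
      "(\<lambda>n. onorm (\<lambda>x. F n x - Q' x)) \<longlonglongrightarrow> 0"
  shows "Q = Q'"
proof
  fix x
  have "norm (Q x - Q' x) \<le> (onorm (\<lambda>x. F n x - Q x) + onorm (\<lambda>x. F n x - Q' x)) * norm x"
    for n
  proof -
    have "norm (Q x - Q' x) \<le> norm (F n x - Q x) + norm (F n x - Q' x)"
      by (metis norm_diff_triangle_le norm_minus_commute order_refl)
    also have "\<dots> \<le> onorm (\<lambda>x. F n x - Q x) * norm x + onorm (\<lambda>x. F n x - Q' x) * norm x"
      by (intro add_mono onorm bounded_linear_sub F Q)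
    finally show ?thesis
      by (simp add: algebra_simps)
  qed
  moreover have "(\<lambda>n. (onorm (\<lambda>x. F n x - Q x) + onorm (\<lambda>x. F n x - Q' x)) * norm x)
      \<longlonglongrightarrow> (0 + 0) * norm x"
    by (intro tendsto_intros lim)
  ultimately have "norm (Q x - Q' x) \<le> (0 + 0) * norm x"
    by (intro tendsto_le[OF trivial_limit_sequentially _ tendsto_const]) auto
  then show "Q x = Q' x"
    by simp
qed

text \<open>The defining property of \<open>op_powr\<close> pins down \<open>P\<^sup>a\<close>: polynomial approximants of
\<open>t\<^sup>a\<close> exist by Weierstrass, and their values at \<open>P\<close> have at most one limit.\<close>

lemma op_powr_eqI:
  assumes P: "bounded_linear P" and a: "0 < a" and Q: "bop Q"
    and lim: "\<And>p. uniform_limit {0..onorm P} (\<lambda>n t. poly (p n) t) (\<lambda>t. t powr a) sequentially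
      \<Longrightarrow> (\<lambda>n. onorm (\<lambda>x. poly_op (p n) P x - Q x)) \<longlonglongrightarrow> 0"
  shows "op_powr P a = Q"
  unfolding op_powr_def
proof (rule the_equality)
  fix Q' assume Q': "bop Q' \<and> (\<forall>p. uniform_limit {0..onorm P} (\<lambda>n. poly (p n))
      (\<lambda>t. t powr a) sequentially \<longrightarrow> (\<lambda>n. onorm (\<lambda>x. poly_op (p n) P x - Q' x)) \<longlonglongrightarrow> 0)"
  have "continuous_on {0..onorm P} (\<lambda>t. t powr a)"
    using a by (intro continuous_on_powr') (auto intro: continuous_intros)
  then obtain p where p: "uniform_limit {0..onorm P} (\<lambda>n t. poly (p n) t) (\<lambda>t. t powr a) sequentially"
    by (rule polynomial_uniform_approximation)
  show "Q' = Q"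
    by (rule operator_limit_unique[OF bounded_linear_poly_op[OF P]])
      (use Q Q' p lim[OF p] in \<open>auto simp: bop_def\<close>)
qed (use Q lim in auto)

context
  fixes v :: "'a::complex_hilbert"
  assumes v: "norm v = 1"
begin

lemma rank1_unit_idem: "rank1 v v (rank1 v v x) = rank1 v v x"
  by (simp add: rank1_apply cinner_scaleC_left cinner_unit[OF v])

lemma rank1_scaled_unit: "rank1 (complex_of_real c *\<^sub>C v) v x = c *\<^sub>R rank1 v v x"
  by (simp add: rank1_apply scaleR_scaleC scaleC_scaleC mult.commute)

text \<open>\<open>P = c (v \<otimes> v)\<close> acts as \<open>0\<close> on \<open>v\<^sup>\<bottom>\<close> and as \<open>c\<close> on \<open>v\<close>, so \<open>p(P)\<close> acts as \<open>p(0)\<close> and \<open>p(c)\<close>.\<close>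

lemma poly_op_scaled_rank1:
  "poly_op p (rank1 (complex_of_real c *\<^sub>C v) v) x
     = poly p 0 *\<^sub>R (x - rank1 v v x) + poly p c *\<^sub>R rank1 v v x"
proof -
  have "(rank1 (complex_of_real c *\<^sub>C v) v ^^ i) x
      = (0 ^ i) *\<^sub>R (x - rank1 v v x) + (c ^ i) *\<^sub>R rank1 v v x" for i
  proof (induction i)
    case (Suc i)
    interpret linear "rank1 v v"
      using bounded_linear_rank1 bounded_linear.linear by blast
    have "(rank1 (complex_of_real c *\<^sub>C v) v ^^ Suc i) x
        = c *\<^sub>R rank1 v v ((0 ^ i) *\<^sub>R (x - rank1 v v x) + (c ^ i) *\<^sub>R rank1 v v x)"
      by (simp only: funpow.simps comp_def Suc.IH rank1_scaled_unit)
    then show ?case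
      by (simp add: add diff scale rank1_unit_idem)
  qed simp
  then show ?thesis
    by (simp add: poly_op_def scaleR_add_right sum.distrib scaleR_sum_left[symmetric]
        poly_altdef[of p 0] poly_altdef[of p c] mult.commute)
qed

lemma bounded_linear_two_eigenvalues:
  "bounded_linear (\<lambda>x. s *\<^sub>R (x - rank1 v v x) + t *\<^sub>R rank1 v v x)"
  using bounded_linear_rank1[of v v]
  by (intro bounded_linear_add bounded_linear_compose[OF bounded_linear_scaleR_right]
      bounded_linear_sub bounded_linear_ident)

lemma onorm_two_eigenvalues_le:
  "onorm (\<lambda>x. s *\<^sub>R (x - rank1 v v x) + t *\<^sub>R rank1 v v x) \<le> 2 * \<bar>s\<bar> + \<bar>t\<bar>"
proof (rule onorm_bound)
  fix x
  have Px: "norm (rank1 v v x) \<le> norm x"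
    using norm_cinner_unit_le[OF v, of x] by (simp add: rank1_apply norm_scaleC v)
  have "norm (s *\<^sub>R (x - rank1 v v x) + t *\<^sub>R rank1 v v x)
      \<le> \<bar>s\<bar> * norm (x - rank1 v v x) + \<bar>t\<bar> * norm (rank1 v v x)"
    by (rule order_trans[OF norm_triangle_ineq]) simp
  also have "\<dots> \<le> \<bar>s\<bar> * (2 * norm x) + \<bar>t\<bar> * norm x"
    using norm_triangle_ineq4[of x "rank1 v v x"] Px
    by (intro add_mono mult_left_mono) auto
  finally show "norm (s *\<^sub>R (x - rank1 v v x) + t *\<^sub>R rank1 v v x) \<le> (2 * \<bar>s\<bar> + \<bar>t\<bar>) * norm x"
    by (simp add: algebra_simps)
qed simp

lemma op_powr_scaled_rank1:
  assumes c: "0 \<le> c" and a: "0 < a"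
  shows "op_powr (rank1 (complex_of_real c *\<^sub>C v) v) a = rank1 (complex_of_real (c powr a) *\<^sub>C v) v"
proof (rule op_powr_eqI[OF bounded_linear_rank1 a bop_rank1])
  let ?P = "rank1 (complex_of_real c *\<^sub>C v) v"
  fix p assume p: "uniform_limit {0..onorm ?P} (\<lambda>n t. poly (p n) t) (\<lambda>t. t powr a) sequentially"
  have "norm (?P v) = c"
    using v c by (simp add: rank1_scaled_unit rank1_apply cinner_unit norm_scaleC scaleC_one)
  then have "c \<le> onorm ?P"
    using onorm[OF bounded_linear_rank1, of "complex_of_real c *\<^sub>C v" v v] v by simp
  then have "(\<lambda>n. poly (p n) 0) \<longlonglongrightarrow> 0 powr a" "(\<lambda>n. poly (p n) c) \<longlonglongrightarrow> c powr a"
    using c onorm_pos_le[OF bounded_linear_rank1]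
    by (intro tendsto_uniform_limitI[OF p]; simp)+
  then have "(\<lambda>n. 2 * \<bar>poly (p n) 0\<bar> + \<bar>poly (p n) c - c powr a\<bar>)
      \<longlonglongrightarrow> 2 * \<bar>0\<bar> + \<bar>c powr a - c powr a\<bar>"
    by (intro tendsto_intros) auto
  then have bound_lim: "(\<lambda>n. 2 * \<bar>poly (p n) 0\<bar> + \<bar>poly (p n) c - c powr a\<bar>) \<longlonglongrightarrow> 0"
    by simp
  have "(\<lambda>x. poly_op (p n) ?P x - rank1 (complex_of_real (c powr a) *\<^sub>C v) v x)
      = (\<lambda>x. poly (p n) 0 *\<^sub>R (x - rank1 v v x) + (poly (p n) c - c powr a) *\<^sub>R rank1 v v x)"
    for n
    by (simp add: fun_eq_iff poly_op_scaled_rank1 rank1_scaled_unit algebra_simps)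
  then show "(\<lambda>n. onorm (\<lambda>x. poly_op (p n) ?P x - rank1 (complex_of_real (c powr a) *\<^sub>C v) v x))
      \<longlonglongrightarrow> 0"
    by (simp only:)
      (intro tendsto_sandwich[OF _ _ tendsto_const bound_lim] always_eventually allI
        onorm_pos_le bounded_linear_two_eigenvalues onorm_two_eigenvalues_le)
qed

end

context
  fixes v :: "'a::complex_hilbert"
  assumes v: "norm v = 1"
begin

lemma op_abs_rank1: "op_abs (rank1 w v) = rank1 (complex_of_real (norm w) *\<^sub>C v) v"
proof -
  have square: "adj (rank1 w v) \<circ> rank1 w v = rank1 (complex_of_real ((norm w)\<^sup>2) *\<^sub>C v) v"
    by (simp add: adj_rank1 fun_eq_iff rank1_apply cinner_scaleC_left cinner_self
        scaleC_scaleC mult.commute)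
  have "op_abs (rank1 w v)
      = rank1 (complex_of_real (((norm w)\<^sup>2) powr (1/2)) *\<^sub>C v) v"
    unfolding op_abs_def square by (rule op_powr_scaled_rank1[OF v]) simp_all
  then show ?thesis
    by (simp add: powr_half_sqrt)
qed

lemma orth_compl_ker_rank1:
  assumes "w \<noteq> 0" and x: "x \<in> orth_compl (ker (rank1 w v))"
  shows "x = cinner x v *\<^sub>C v"
proof -
  define z where "z = x - cinner x v *\<^sub>C v"
  have zv: "cinner z v = 0"
    using cinner_proj_orthogonal[OF v] by (simp add: z_def)
  then have "cinner x z = 0"
    using x \<open>w \<noteq> 0\<close> by (simp add: orth_compl_def ker_rank1)
  moreover have "cinner v z = 0"
    using zv cinner_commute[of v z] by simp
  ultimately have "cinner z z = 0"
    by (simp add: z_def cinner_diff_left cinner_scaleC_left)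
  then show ?thesis
    by (simp add: z_def cinner_eq_zero_iff)
qed

lemma polar_decomposition_rank1: "rank1 w v x = rank1 (sgn w) v (op_abs (rank1 w v) x)"
proof -
  have "rank1 (sgn w) v (op_abs (rank1 w v) x) = cinner x v *\<^sub>C (norm w *\<^sub>R sgn w)"
    by (simp add: op_abs_rank1 rank1_apply cinner_scaleC_left cinner_unit[OF v] scaleC_scaleC
        scaleR_scaleC)
  then show ?thesis
    by (simp add: norm_scaleR_sgn rank1_apply)
qed

lemma partial_isometry_rank1_sgn: "partial_isometry (rank1 (sgn w) v)"
  unfolding partial_isometry_def
proof (intro conjI ballI bop_rank1)
  fix x assume x: "x \<in> orth_compl (ker (rank1 (sgn w) v))"
  show "norm (rank1 (sgn w) v x) = norm x"
  proof (cases "w = 0")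
    case True
    then have "cinner x x = 0"
      using x by (simp add: orth_compl_def ker_rank1)
    then show ?thesis
      using True by (simp add: cinner_eq_zero_iff rank1_apply)
  next
    case False
    then have "x = cinner x v *\<^sub>C v"
      using x by (intro orth_compl_ker_rank1) (simp_all add: sgn_zero_iff)
    then have "norm x = cmod (cinner x v)"
      by (metis norm_scaleC v mult_1_right)
    then show ?thesis
      using False by (simp add: rank1_apply norm_scaleC norm_sgn)
  qed
qed

lemma polar_part_rank1: "polar_part (rank1 w v) = rank1 (sgn w) v"
  unfolding polar_part_def
proof (rule the_equality)
  have "cinner x (sgn w) = 0 \<longleftrightarrow> cinner x w = 0" for x
    by (cases "w = 0") (simp_all add: sgn_div_norm scaleR_scaleC cinner_scaleC_right)
  then show "partial_isometry (rank1 (sgn w) v) \<and>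
      (\<forall>x. rank1 w v x = rank1 (sgn w) v (op_abs (rank1 w v) x)) \<and>
      ker (rank1 (sgn w) v) = ker (rank1 w v) \<and>
      ker (adj (rank1 (sgn w) v)) = ker (adj (rank1 w v))"
    using v by (auto simp: ker_rank1 adj_rank1 sgn_zero_iff
        intro: partial_isometry_rank1_sgn polar_decomposition_rank1)
next
  fix V assume "partial_isometry V \<and> (\<forall>x. rank1 w v x = V (op_abs (rank1 w v) x)) \<and>
      ker V = ker (rank1 w v) \<and> ker (adj V) = ker (adj (rank1 w v))"
  then have V: "bop V" and polar: "\<And>x. rank1 w v x = V (op_abs (rank1 w v) x)"
    and kerV: "ker V = ker (rank1 w v)"
    by (auto simp: partial_isometry_def)
  interpret V: linear V
    using V by (simp add: bop_def bounded_linear.linear)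
  show "V = rank1 (sgn w) v"
  proof
    fix x
    show "V x = rank1 (sgn w) v x"
    proof (cases "w = 0")
      case True
      then show ?thesis
        using kerV by (auto simp: ker_def ker_rank1 rank1_apply)
    next
      case False
      \<comment> \<open>\<open>V\<close> and \<open>sgn w \<otimes> v\<close> agree on the range of \<open>|w \<otimes> v|\<close>, which contains \<open>v\<close>.\<close>
      define u where "u = complex_of_real (1 / norm w) *\<^sub>C v"
      have abs_u: "op_abs (rank1 w v) u = v"
        using False by (simp add: u_def op_abs_rank1 rank1_apply cinner_scaleC_left
            cinner_unit[OF v] scaleC_scaleC scaleC_one flip: of_real_mult)
      have "V v = rank1 w v u"
        using polar[of u] by (simp only: abs_u)
      also have "\<dots> = rank1 (sgn w) v v"
        using polar_decomposition_rank1[of w u] by (simp only: abs_u)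
      finally have Vv: "V v = sgn w"
        by (simp add: rank1_apply cinner_unit[OF v] scaleC_one)
      have "x - cinner x v *\<^sub>C v \<in> ker (rank1 w v)"
        using False cinner_proj_orthogonal[OF v, of x] by (simp add: ker_rank1)
      then have "V (x - cinner x v *\<^sub>C v) = 0"
        using kerV unfolding ker_def by blast
      then have "V x = V (cinner x v *\<^sub>C v)"
        by (simp add: V.diff)
      then show ?thesis
        using V by (simp add: Vv rank1_apply bop_def)
    qed
  qed
qed

lemma aluthge_rank1:
  assumes "0 < l" "l < 1"
  shows "aluthge l (rank1 w v) = rank1 (cinner w v *\<^sub>C v) v"
proof
  fix x
  have "norm w powr l * norm w powr (1 - l) = norm w"
    by (cases "w = 0") (simp_all flip: powr_add)
  then have "complex_of_real (norm w powr l) * complex_of_real (norm w powr (1 - l))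
      = complex_of_real (norm w)"
    by (simp flip: of_real_mult)
  moreover have "cinner w v = complex_of_real (norm w) * cinner (sgn w) v"
    by (subst (1) norm_scaleR_sgn[symmetric]) (simp only: scaleR_scaleC cinner_scaleC_left)
  moreover have "aluthge l (rank1 w v) x = (complex_of_real (norm w powr l)
      * complex_of_real (norm w powr (1 - l)) * cinner (sgn w) v * cinner x v) *\<^sub>C v"
    using assms
    by (simp add: aluthge_def op_abs_rank1 polar_part_rank1 op_powr_scaled_rank1[OF v]
        rank1_apply cinner_scaleC_left cinner_unit[OF v] scaleC_scaleC mult_ac)
  ultimately show "aluthge l (rank1 w v) x = rank1 (cinner w v *\<^sub>C v) v x"
    by (simp add: rank1_apply scaleC_scaleC mult_ac)
qed

lemma aluthge_comp_rank1_self: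
  "0 < l \<Longrightarrow> l < 1 \<Longrightarrow> bop A \<Longrightarrow> aluthge l (A \<circ> rank1 v v) = rank1 (cinner (A v) v *\<^sub>C v) v"
  by (simp add: comp_rank1 aluthge_rank1)

lemma aluthge_scalar_comp_rank1_self:
  "0 < l \<Longrightarrow> l < 1 \<Longrightarrow> aluthge l ((\<lambda>u. \<alpha> *\<^sub>C idop u) \<circ> rank1 v v) = rank1 (\<alpha> *\<^sub>C v) v"
  using aluthge_comp_rank1_self[OF _ _ bop_scalar]
  by (simp add: idop_def cinner_scaleC_left cinner_unit[OF v])

end

theorem mainTheorem10:
  fixes \<Phi> :: "('a::complex_hilbert \<Rightarrow> 'a) \<Rightarrow> ('b::complex_hilbert \<Rightarrow> 'b)"
    and l :: real
    and h :: "complex \<Rightarrow> complex"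
  assumes l: "0 < l" "l < 1"
    and bij: "bij_betw \<Phi> {T. bop T} {T. bop T}"
    and pres: "\<And>A B. bop A \<Longrightarrow> bop B \<Longrightarrow>
               aluthge l (\<Phi> A \<circ> \<Phi> B) = \<Phi> (aluthge l (A \<circ> B))"
    and h: "\<And>\<alpha>. \<Phi> (\<lambda>u. \<alpha> *\<^sub>C idop u) = (\<lambda>v. h \<alpha> *\<^sub>C idop v)"
  shows "\<forall>A x y. bop A \<longrightarrow> norm x = 1 \<longrightarrow> norm y = 1 \<longrightarrow>
           \<Phi> (rank1 x x) = rank1 y y \<longrightarrow>
           cinner (\<Phi> A y) y = h (cinner (A x) x)"
proof (intro allI impI)
  fix A :: "'a \<Rightarrow> 'a" and x :: 'a and y :: 'b
  assume A: "bop A" and x: "norm x = 1" and y: "norm y = 1" and xy: "\<Phi> (rank1 x x) = rank1 y y"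
  define \<alpha> where "\<alpha> = cinner (A x) x"
  have "bop (\<Phi> A)"
    using bij A by (auto simp: bij_betw_def)
  then have "rank1 (cinner (\<Phi> A y) y *\<^sub>C y) y = \<Phi> (rank1 (\<alpha> *\<^sub>C x) x)"
    using pres[OF A bop_rank1, of x x]
    by (simp add: xy aluthge_comp_rank1_self[OF x l A] aluthge_comp_rank1_self[OF y l] \<alpha>_def)
  moreover have "rank1 (h \<alpha> *\<^sub>C y) y = \<Phi> (rank1 (\<alpha> *\<^sub>C x) x)"
    using pres[OF bop_scalar bop_rank1, of \<alpha> x x]
    by (simp only: h xy aluthge_scalar_comp_rank1_self[OF x l] aluthge_scalar_comp_rank1_self[OF y l])
  ultimately show "cinner (\<Phi> A y) y = h (cinner (A x) x)"
    by (metis rank1_scaled_unit_eq_iff[OF y] \<alpha>_def)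
qed

end
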